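(* Under the hypotheses and notation below, fix $\epsilon>0$ and define $$\Gamma_N^{\epsilon}(\mathcal{K}^* )=\{z\in\mathrm{Grid}(N):\ \sigma_{\inf}((\mathcal{K}^*-zI)\mathcal{P}_N^* )<\epsilon\}.$$ Then $\Gamma_N^{\epsilon}(\mathcal{K}^* )\subset\mathrm{Sp}_{\mathrm{ap},\epsilon}(\mathcal{K}^* )$ for every $N\in\mathbb{N}$, and $\Gamma_N^{\epsilon}(\mathcal{K}^* )\to\mathrm{Sp}_{\mathrm{ap},\epsilon}(\mathcal{K}^* )$ in the Attouch–Wets sense as $N\to\infty$.
   Context: $\mathcal{H}$ is a reproducing kernel Hilbert space (RKHS) of complex-valued functions on a set $\mathcal{X}$ with reproducing kernel $\mathfrak{K}$, inner product $\langle\cdot,\cdot\rangle$ and norm $\|\cdot\|$; $\mathfrak{K}_x$ is the kernel function at $x$ ($g(x)=\langle g,\mathfrak{K}_x\rangle$). For $F:\mathcal{X}\to\mathcal{X}$ the Koopman operator $\mathcal{K}g=g\circ F$ has domain $\{g\in\mathcal{H}:g\circ F\in\mathcal{H}\}$ and is closed; assume it is densely defined, and let $\mathcal{K}^*$ be its adjoint (then $\mathcal{K}^*\mathfrak{K}_x=\mathfrak{K}_{F(x)}$). Let $\mathfrak{K}_1,\mathfrak{K}_2,\dots$ be a countable family of kernel functions whose span is a core of $\mathcal{K}^*$, $V_N=\mathrm{span}\{\mathfrak{K}_1,\dots,\mathfrak{K}_N\}$, $\mathcal{P}_N$ the orthogonal projection onto $V_N$ and $\mathcal{P}_N^*$ the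 inclusion of $V_N$ into $\mathcal{H}$. Injection modulus: $\sigma_{\inf}(T)=\inf\{\|Tg\|/\|g\|:0\neq g\in\mathcal{D}(T)\}$. Approximate point $\epsilon$-pseudospectrum: $\mathrm{Sp}_{\mathrm{ap},\epsilon}(T)=\overline{\{z\in\mathbb{C}:\sigma_{\inf}(T-zI)<\epsilon\}}$. $\mathrm{Grid}(N)=\frac1N(\mathbb{Z}+i\mathbb{Z})\cap\{z:|z|\le N\}$. Attouch–Wets convergence of closed sets $C_n\to C$: if $C=\emptyset$, this means that for every $m\in\mathbb{N}$, $C_n\cap B_m(0)=\emptyset$ for all large $n$; if $C\ne\emptyset$, it means $C_n\neq\emptyset$ for large $n$ and $d_{\mathrm{AW}}(C_n,C)\to0$, where $d_{\mathrm{AW}}(X,Y)=\sum_{m\ge1}2^{-m}\min\{1,\sup_{x\in B_m(0)}|\mathrm{dist}(x,X)-\mathrm{dist}(x,Y)|\}$ and $B_m(0)$ is the closed ball of radius $m$ about $0$; equivalently, for every $\delta>0$ and compact $K\subset\mathbb{C}$, eventually $C_n\cap K\subset C+B_\delta(0)$ and $C\cap K\subset C_n+B_\delta(0)$. *)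

theory Defs
  imports "HOL-Analysis.Analysis"
begin

text \<open>Functions on the set X are modelled as functions on a type 'x.
  H is a set of complex-valued functions, ip its inner product
  (linear in the first, conjugate linear in the second argument),
  kf x is the kernel function at x.\<close>

definition hnorm :: "(('x \<Rightarrow> complex) \<Rightarrow> ('x \<Rightarrow> complex) \<Rightarrow> complex)
    \<Rightarrow> ('x \<Rightarrow> complex) \<Rightarrow> real" where
  "hnorm ip g = sqrt (Re (ip g g))"

definition fdiff :: "('x \<Rightarrow> complex) \<Rightarrow> ('x \<Rightarrow> complex) \<Rightarrow> ('x \<Rightarrow> complex)" where
  "fdiff f g = (\<lambda>y. f y - g y)"

definition is_hilbert_space :: "('x \<Rightarrow> complex) set
    \<Rightarrow> (('x \<Rightarrow> complex) \<Rightarrow> ('x \<Rightarrow> complex) \<Rightarrow> complex) \<Rightarrow> bool" where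
  "is_hilbert_space H ip \<longleftrightarrow>
     (\<lambda>y. 0) \<in> H \<and>
     (\<forall>f\<in>H. \<forall>g\<in>H. \<forall>c::complex. (\<lambda>y. c * f y + g y) \<in> H) \<and>
     (\<forall>f\<in>H. \<forall>g\<in>H. \<forall>h\<in>H. \<forall>c::complex.
        ip (\<lambda>y. c * f y + g y) h = c * ip f h + ip g h) \<and>
     (\<forall>f\<in>H. \<forall>g\<in>H. ip g f = cnj (ip f g)) \<and>
     (\<forall>f\<in>H. Im (ip f f) = 0 \<and> Re (ip f f) \<ge> 0) \<and>
     (\<forall>f\<in>H. ip f f = 0 \<longrightarrow> f = (\<lambda>y. 0)) \<and>
     (\<forall>s. (\<forall>n. s n \<in> H) \<and>
          (\<forall>e>0. \<exists>M. \<forall>m\<ge>M. \<forall>n\<ge>M. hnorm ip (fdiff (s m) (s n)) < e)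
          \<longrightarrow> (\<exists>g\<in>H. (\<lambda>n. hnorm ip (fdiff (s n) g)) \<longlonglongrightarrow> 0))"

definition is_rkhs :: "('x \<Rightarrow> complex) set
    \<Rightarrow> (('x \<Rightarrow> complex) \<Rightarrow> ('x \<Rightarrow> complex) \<Rightarrow> complex)
    \<Rightarrow> ('x \<Rightarrow> 'x \<Rightarrow> complex) \<Rightarrow> bool" where
  "is_rkhs H ip kf \<longleftrightarrow> is_hilbert_space H ip \<and>
     (\<forall>x. kf x \<in> H) \<and> (\<forall>g\<in>H. \<forall>x. g x = ip g (kf x))"

definition koop_dom :: "('x \<Rightarrow> complex) set \<Rightarrow> ('x \<Rightarrow> 'x) \<Rightarrow> ('x \<Rightarrow> complex) set" where
  "koop_dom H F = {g\<in>H. g \<circ> F \<in> H}"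

definition densely_defined_in where
  "densely_defined_in H ip D \<longleftrightarrow> D \<subseteq> H \<and>
     (\<forall>g\<in>H. \<forall>e>0. \<exists>f\<in>D. hnorm ip (fdiff g f) < e)"

definition kadj_dom where
  "kadj_dom H ip F = {h\<in>H. \<exists>w\<in>H. \<forall>g\<in>koop_dom H F. ip (g \<circ> F) h = ip g w}"

definition kadj where
  "kadj H ip F h = (THE w. w \<in> H \<and> (\<forall>g\<in>koop_dom H F. ip (g \<circ> F) h = ip g w))"

definition fspan :: "('x \<Rightarrow> complex) set \<Rightarrow> ('x \<Rightarrow> complex) set" where
  "fspan S = {g. \<exists>I c. finite I \<and> I \<subseteq> S \<and> g = (\<lambda>y. \<Sum>f\<in>I. c f * f y)}"

definition is_core where
  "is_core ip D T S \<longleftrightarrow> S \<subseteq> D \<and>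
     (\<forall>h\<in>D. \<exists>s. (\<forall>n. s n \<in> S) \<and> (\<lambda>n. hnorm ip (fdiff (s n) h)) \<longlonglongrightarrow> 0
                 \<and> (\<lambda>n. hnorm ip (fdiff (T (s n)) (T h))) \<longlonglongrightarrow> 0)"

text \<open>Injection modulus (infimum of the empty set is +\<infinity>).\<close>
definition sigma_inf where
  "sigma_inf ip D T = Inf {ereal (hnorm ip (T g) / hnorm ip g) | g. g \<in> D \<and> g \<noteq> (\<lambda>y. 0)}"

definition kadj_shift where
  "kadj_shift H ip F z = (\<lambda>g. fdiff (kadj H ip F g) (\<lambda>y. z * g y))"

definition sp_ap_eps where
  "sp_ap_eps H ip F \<epsilon> =
     closure {z. sigma_inf ip (kadj_dom H ip F) (kadj_shift H ip F z) < ereal \<epsilon>}"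

definition Grid :: "nat \<Rightarrow> complex set" where
  "Grid N = {z. \<exists>a b :: int. z = Complex (of_int a / real N) (of_int b / real N) \<and> cmod z \<le> real N}"

definition V_N where
  "V_N kf xs N = fspan ((\<lambda>j. kf (xs j)) ` {1..N})"

definition Gamma_N where
  "Gamma_N H ip kf F xs \<epsilon> N =
     {z \<in> Grid N. sigma_inf ip (V_N kf xs N) (kadj_shift H ip F z) < ereal \<epsilon>}"

definition d_AW :: "complex set \<Rightarrow> complex set \<Rightarrow> real" where
  "d_AW X Y = (\<Sum>m. (1/2) ^ (Suc m) *
      min 1 (SUP x\<in>cball 0 (real (Suc m)). \<bar>infdist x X - infdist x Y\<bar>))"

definition AW_converges :: "(nat \<Rightarrow> complex set) \<Rightarrow> complex set \<Rightarrow> bool" where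
  "AW_converges C0 C \<longleftrightarrow>
     (if C = {} then (\<forall>m::nat. eventually (\<lambda>n. C0 n \<inter> cball 0 (real m) = {}) sequentially)
      else (eventually (\<lambda>n. C0 n \<noteq> {}) sequentially \<and>
            (\<lambda>n. d_AW (C0 n) C) \<longlonglongrightarrow> 0))"

end

theory Submission
  imports Defs
begin

text \<open>
  Restricting the domain of K* - zI to the core spanned by the kernel functions does not change
  its injection modulus, so whenever it is below \<epsilon> some nonzero vector of that span
  already has quotient ||(K* - zI)g|| / ||g|| < \<epsilon>. This vector lies in V_N for all large N,
  and its quotient moves by at most |w - z| when z is replaced by a grid point w; hence every
  such z is approached by points of \<Gamma>_N, while \<Gamma>_N stays inside the pseudospectrum
  because V_N lies in the domain. Approximation of each point of a set by subsets of its closure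
  becomes uniform on compact sets by compactness, which is Attouch-Wets convergence.
\<close>

subsection \<open>Inner-product spaces of functions\<close>

locale hilbert_fun_space =
  fixes H :: "('x \<Rightarrow> complex) set"
    and ip :: "('x \<Rightarrow> complex) \<Rightarrow> ('x \<Rightarrow> complex) \<Rightarrow> complex"
  assumes hilbert: "is_hilbert_space H ip"
begin

lemma zero_mem: "(\<lambda>y. 0) \<in> H"
  using hilbert unfolding is_hilbert_space_def by blast

lemma lincomb_mem: "f \<in> H \<Longrightarrow> g \<in> H \<Longrightarrow> (\<lambda>y. c * f y + g y) \<in> H"
  using hilbert unfolding is_hilbert_space_def by blast

lemma ip_lincomb_left:
  "f \<in> H \<Longrightarrow> g \<in> H \<Longrightarrow> h \<in> H \<Longrightarrow> ip (\<lambda>y. c * f y + g y) h = c * ip f h + ip g h"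
  using hilbert unfolding is_hilbert_space_def by blast

lemma ip_commute: "f \<in> H \<Longrightarrow> g \<in> H \<Longrightarrow> ip g f = cnj (ip f g)"
  using hilbert unfolding is_hilbert_space_def by blast

lemma ip_self_nonneg: "f \<in> H \<Longrightarrow> Re (ip f f) \<ge> 0"
  using hilbert unfolding is_hilbert_space_def by blast

lemma ip_self_real: "f \<in> H \<Longrightarrow> ip f f = of_real (Re (ip f f))"
proof -
  assume "f \<in> H"
  then have "Im (ip f f) = 0" using hilbert unfolding is_hilbert_space_def by blast
  then show ?thesis by (simp add: complex_eq_iff)
qed

lemma ip_self_eq_0: "f \<in> H \<Longrightarrow> ip f f = 0 \<Longrightarrow> f = (\<lambda>y. 0)"
  using hilbert unfolding is_hilbert_space_def by blast

lemma scale_mem: "f \<in> H \<Longrightarrow> (\<lambda>y. c * f y) \<in> H"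
  using lincomb_mem[of f "\<lambda>y. 0" c] zero_mem by simp

lemma fdiff_mem: "f \<in> H \<Longrightarrow> g \<in> H \<Longrightarrow> fdiff f g \<in> H"
  using lincomb_mem[of g f "-1"] by (simp add: fdiff_def)

lemma ip_zero_left: "h \<in> H \<Longrightarrow> ip (\<lambda>y. 0) h = 0"
  using ip_lincomb_left[of "\<lambda>y. 0" "\<lambda>y. 0" h 1] zero_mem by simp

lemma ip_fdiff_left: "f \<in> H \<Longrightarrow> g \<in> H \<Longrightarrow> h \<in> H \<Longrightarrow> ip (fdiff f g) h = ip f h - ip g h"
  using ip_lincomb_left[of g f h "-1"] by (simp add: fdiff_def)

lemma ip_lincomb_self:
  assumes f: "f \<in> H" and g: "g \<in> H"
  shows "ip (\<lambda>y. c * g y + f y) (\<lambda>y. c * g y + f y)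
     = c * cnj c * ip g g + c * ip g f + cnj c * ip f g + ip f f"
proof -
  define k where "k = (\<lambda>y. c * g y + f y)"
  have k: "k \<in> H" unfolding k_def using g f by (rule lincomb_mem)
  have "ip k k = c * cnj (ip k g) + cnj (ip k f)"
    using ip_lincomb_left[OF g f k] ip_commute[OF k g] ip_commute[OF k f] by (simp add: k_def)
  also have "\<dots> = c * cnj (c * ip g g + ip f g) + cnj (c * ip g f + ip f f)"
    using ip_lincomb_left[OF g f g] ip_lincomb_left[OF g f f] by (simp add: k_def)
  also have "\<dots> = c * cnj c * ip g g + c * ip g f + cnj c * ip f g + ip f f"
    using ip_commute[OF f f] ip_commute[OF g g] ip_commute[OF f g] ip_commute[OF g f]
    by (simp add: algebra_simps)
  finally show ?thesis unfolding k_def .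
qed

lemma hnorm_nonneg: "f \<in> H \<Longrightarrow> hnorm ip f \<ge> 0"
  unfolding hnorm_def using ip_self_nonneg by simp

lemma hnorm_square: "f \<in> H \<Longrightarrow> (hnorm ip f)\<^sup>2 = Re (ip f f)"
  unfolding hnorm_def using ip_self_nonneg by simp

lemma hnorm_zero: "hnorm ip (\<lambda>y. 0) = 0"
  unfolding hnorm_def using ip_zero_left zero_mem by simp

lemma hnorm_pos: "f \<in> H \<Longrightarrow> f \<noteq> (\<lambda>y. 0) \<Longrightarrow> hnorm ip f > 0"
  unfolding hnorm_def using ip_self_eq_0 ip_self_real ip_self_nonneg
  by (metis less_eq_real_def of_real_0 real_sqrt_gt_0_iff)

lemma Cauchy_Schwarz:
  assumes f: "f \<in> H" and g: "g \<in> H"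
  shows "cmod (ip f g) \<le> hnorm ip f * hnorm ip g"
proof (cases "ip g g = 0")
  case True
  then have "ip f g = 0" using ip_self_eq_0 ip_commute[OF g f] ip_zero_left[OF f] g by simp
  then show ?thesis using f g by (simp add: hnorm_nonneg)
next
  case False
  define A B where "A = Re (ip f f)" and "B = Re (ip g g)"
  define a where "a = ip f g"
  have ff: "ip f f = of_real A" and gg: "ip g g = of_real B"
    unfolding A_def B_def by (fact ip_self_real[OF f], fact ip_self_real[OF g])
  have "B \<noteq> 0" using False gg by auto
  then have B: "B > 0" using ip_self_nonneg[OF g] B_def by simp
  have gf: "ip g f = cnj a" using ip_commute[OF f g] by (simp add: a_def)
  define t where "t = - (a / of_real B)"
  \<comment> \<open>the minimiser of the quadratic t \<mapsto> \<langle>t g + f, t g + f\<rangle>\<close>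
  have "ip (\<lambda>y. t * g y + f y) (\<lambda>y. t * g y + f y)
      = t * cnj t * of_real B + t * cnj a + cnj t * a + of_real A"
    using ip_lincomb_self[OF f g, of t] by (simp add: ff gg gf a_def)
  also have "\<dots> = of_real (A - (cmod a)\<^sup>2 / B)"
  proof -
    have "a * cnj a = of_real ((cmod a)\<^sup>2)" "cnj a * a = of_real ((cmod a)\<^sup>2)"
      by (metis complex_norm_square, metis complex_norm_square mult.commute)
    then show ?thesis using B by (simp add: t_def field_simps)
  qed
  finally have "A - (cmod a)\<^sup>2 / B \<ge> 0"
    using ip_self_nonneg[OF lincomb_mem[OF g f, of t]] by simp
  then have "(cmod a)\<^sup>2 \<le> A * B"
    using B by (simp add: field_simps)
  also have "A * B = (hnorm ip f * hnorm ip g)\<^sup>2"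
    using hnorm_square[OF f] hnorm_square[OF g] by (simp add: A_def B_def power_mult_distrib)
  finally show ?thesis unfolding a_def
    by (rule power2_le_imp_le) (simp add: hnorm_nonneg f g)
qed

lemma hnorm_scale: "f \<in> H \<Longrightarrow> hnorm ip (\<lambda>y. c * f y) = cmod c * hnorm ip f"
proof -
  assume f: "f \<in> H"
  have "ip (\<lambda>y. c * f y) (\<lambda>y. c * f y) = c * cnj c * ip f f"
    using ip_lincomb_self[OF zero_mem f, of c] ip_zero_left[OF f] ip_zero_left[OF zero_mem]
      ip_commute[OF zero_mem f] by simp
  also have "\<dots> = of_real ((cmod c)\<^sup>2 * Re (ip f f))"
    using ip_self_real[OF f] by (metis complex_norm_square of_real_mult)
  finally show ?thesis unfolding hnorm_def by (simp add: real_sqrt_mult)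
qed

lemma hnorm_add_le:
  assumes f: "f \<in> H" and g: "g \<in> H"
  shows "hnorm ip (\<lambda>y. f y + g y) \<le> hnorm ip f + hnorm ip g"
proof -
  have "ip (\<lambda>y. f y + g y) (\<lambda>y. f y + g y) = ip f f + ip f g + ip g f + ip g g"
    using ip_lincomb_self[OF g f, of 1] by (simp add: algebra_simps)
  then have "Re (ip (\<lambda>y. f y + g y) (\<lambda>y. f y + g y)) = Re (ip f f) + 2 * Re (ip f g) + Re (ip g g)"
    using ip_commute[OF f g] by simp
  also have "\<dots> \<le> Re (ip f f) + 2 * (hnorm ip f * hnorm ip g) + Re (ip g g)"
    using Cauchy_Schwarz[OF f g] complex_Re_le_cmod[of "ip f g"] by linarith
  also have "\<dots> = (hnorm ip f + hnorm ip g)\<^sup>2"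
    using hnorm_square[OF f] hnorm_square[OF g] by (simp add: power2_eq_square algebra_simps)
  finally have "hnorm ip (\<lambda>y. f y + g y) \<le> sqrt ((hnorm ip f + hnorm ip g)\<^sup>2)"
    unfolding hnorm_def[of ip "\<lambda>y. f y + g y"] by (rule real_sqrt_le_mono)
  then show ?thesis using hnorm_nonneg[OF f] hnorm_nonneg[OF g] by simp
qed

lemma hnorm_lincomb_le:
  "f \<in> H \<Longrightarrow> g \<in> H \<Longrightarrow> hnorm ip (\<lambda>y. c * f y + g y) \<le> cmod c * hnorm ip f + hnorm ip g"
  using hnorm_add_le[OF scale_mem] hnorm_scale by simp

lemma hnorm_fdiff_commute: "f \<in> H \<Longrightarrow> g \<in> H \<Longrightarrow> hnorm ip (fdiff f g) = hnorm ip (fdiff g f)"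
  using hnorm_scale[OF fdiff_mem, of g f "-1"] by (simp add: fdiff_def)

lemma hnorm_diff_le: "f \<in> H \<Longrightarrow> g \<in> H \<Longrightarrow> \<bar>hnorm ip f - hnorm ip g\<bar> \<le> hnorm ip (fdiff f g)"
  using hnorm_add_le[OF fdiff_mem, of f g g] hnorm_add_le[OF fdiff_mem, of g f f]
    hnorm_fdiff_commute[of f g]
  by (simp add: fdiff_def)

lemma dense_orthogonal_eq_zero:
  assumes "densely_defined_in H ip D" and d: "d \<in> H" and orth: "\<And>g. g \<in> D \<Longrightarrow> ip g d = 0"
  shows "d = (\<lambda>y. 0)"
proof (rule ccontr)
  assume "d \<noteq> (\<lambda>y. 0)"
  then have pos: "hnorm ip d > 0" using hnorm_pos[OF d] by simp
  with assms obtain g where g: "g \<in> D" "g \<in> H" and close: "hnorm ip (fdiff d g) < hnorm ip d"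
    unfolding densely_defined_in_def by blast
  have "(hnorm ip d)\<^sup>2 = Re (ip (fdiff d g) d)"
    using hnorm_square[OF d] ip_fdiff_left[OF d g(2) d] ip_commute[OF g(2) d] orth[OF g(1)] by simp
  also have "\<dots> \<le> hnorm ip (fdiff d g) * hnorm ip d"
    using complex_Re_le_cmod Cauchy_Schwarz[OF fdiff_mem[OF d g(2)] d] by (rule order_trans)
  also have "\<dots> < (hnorm ip d)\<^sup>2" using close pos by (simp add: power2_eq_square)
  finally show False by simp
qed

lemma hnorm_tendsto:
  assumes "\<And>n. s n \<in> H" "g \<in> H" "(\<lambda>n. hnorm ip (fdiff (s n) g)) \<longlonglongrightarrow> 0"
  shows "(\<lambda>n. hnorm ip (s n)) \<longlonglongrightarrow> hnorm ip g"
proof -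
  have "(\<lambda>n. hnorm ip (s n) - hnorm ip g) \<longlonglongrightarrow> 0"
  proof (rule Lim_null_comparison)
    show "\<forall>\<^sub>F n in sequentially. norm (hnorm ip (s n) - hnorm ip g) \<le> hnorm ip (fdiff (s n) g)"
      using assms(1,2) hnorm_diff_le by simp
  qed (fact assms(3))
  then show ?thesis by (simp add: LIM_zero_iff)
qed

end

lemma sigma_inf_le:
  "g \<in> D \<Longrightarrow> g \<noteq> (\<lambda>y. 0) \<Longrightarrow> sigma_inf ip D T \<le> ereal (hnorm ip (T g) / hnorm ip g)"
  unfolding sigma_inf_def by (blast intro: Inf_lower)

lemma sigma_inf_antimono: "D' \<subseteq> D \<Longrightarrow> sigma_inf ip D T \<le> sigma_inf ip D' T"
  unfolding sigma_inf_def by (rule Inf_superset_mono) blast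

lemma sigma_inf_less_iff:
  "sigma_inf ip D T < c \<longleftrightarrow> (\<exists>g\<in>D. g \<noteq> (\<lambda>y. 0) \<and> ereal (hnorm ip (T g) / hnorm ip g) < c)"
  unfolding sigma_inf_def Inf_less_iff by blast

lemma fspan_mono: "A \<subseteq> B \<Longrightarrow> fspan A \<subseteq> fspan B"
  unfolding fspan_def by blast

lemma V_N_subset_fspan: "V_N kf xs N \<subseteq> fspan ((\<lambda>j. kf (xs j)) ` {1..})"
  unfolding V_N_def by (intro fspan_mono) auto

lemma eventually_mem_V_N:
  assumes "s \<in> fspan ((\<lambda>j. kf (xs j)) ` {1..})"
  shows "\<forall>\<^sub>F N in sequentially. s \<in> V_N kf xs N"
proof -
  obtain I c where I: "finite I" "I \<subseteq> (\<lambda>j. kf (xs j)) ` {1..}" and s: "s = (\<lambda>y. \<Sum>f\<in>I. c f * f y)"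
    using assms unfolding fspan_def by blast
  obtain J where J: "J \<subseteq> {1..}" "finite J" "I = (\<lambda>j. kf (xs j)) ` J"
    using finite_subset_image[OF I] by blast
  have "s \<in> V_N kf xs N" if N: "N \<ge> Max (insert 0 J)" for N
  proof -
    have "J \<subseteq> {1..N}" using J N by (auto simp: subset_iff)
    then show ?thesis unfolding V_N_def fspan_def using I(1) J(3) s by blast
  qed
  then show ?thesis unfolding eventually_sequentially by blast
qed

lemma eventually_Grid_near: "\<forall>\<^sub>F N in sequentially. \<exists>w\<in>Grid N. cmod (w - z) \<le> 1 / real N"
proof -
  have "\<exists>w\<in>Grid N. cmod (w - z) \<le> 1 / real N" if N: "N \<ge> 1" "cmod z + 1 \<le> real N" for N
  proof -
    define w where "w = Complex (round (real N * Re z) / real N) (round (real N * Im z) / real N)"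
    have "\<bar>Re (w - z)\<bar> = \<bar>round (real N * Re z) - real N * Re z\<bar> / real N"
      using N(1) by (simp add: w_def abs_divide field_simps)
    also have "\<dots> \<le> (1/2) / real N"
      by (rule divide_right_mono[OF of_int_round_abs_le]) simp
    finally have re: "\<bar>Re (w - z)\<bar> \<le> (1/2) / real N" .
    have "\<bar>Im (w - z)\<bar> = \<bar>round (real N * Im z) - real N * Im z\<bar> / real N"
      using N(1) by (simp add: w_def abs_divide field_simps)
    also have "\<dots> \<le> (1/2) / real N"
      by (rule divide_right_mono[OF of_int_round_abs_le]) simp
    finally have im: "\<bar>Im (w - z)\<bar> \<le> (1/2) / real N" .
    have close: "cmod (w - z) \<le> 1 / real N" using cmod_le[of "w - z"] re im by simp
    moreover have "1 / real N \<le> 1" using N(1) by simp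
    then have "cmod w \<le> real N" using close N(2) norm_triangle_ineq2[of w z] by linarith
    then have "w \<in> Grid N" unfolding Grid_def w_def by blast
    ultimately show ?thesis by blast
  qed
  moreover obtain M :: nat where "cmod z + 1 \<le> real M" using real_arch_simple by blast
  ultimately show ?thesis unfolding eventually_sequentially
    by (intro exI[of _ "max 1 M"]) auto
qed

subsection \<open>The adjoint of the Koopman operator\<close>

locale koopman_adjoint = hilbert_fun_space +
  fixes F :: "'x \<Rightarrow> 'x"
  assumes dense: "densely_defined_in H ip (koop_dom H F)"
begin

lemma kadj_dom_subset: "kadj_dom H ip F \<subseteq> H"
  unfolding kadj_dom_def by blast

lemma kadj_mem:
  assumes h: "h \<in> kadj_dom H ip F"
  shows "kadj H ip F h \<in> H"
proof -
  define adj where "adj w \<longleftrightarrow> w \<in> H \<and> (\<forall>g\<in>koop_dom H F. ip (g \<circ> F) h = ip g w)" for w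
  obtain w where w: "adj w" using h unfolding kadj_dom_def adj_def by blast
  have unique: "w' = w" if w': "adj w'" for w'
  proof -
    have H: "w \<in> H" "w' \<in> H" using w w' adj_def by auto
    have "ip g (fdiff w' w) = 0" if g: "g \<in> koop_dom H F" for g
    proof -
      have gH: "g \<in> H" using g koop_dom_def by blast
      have "ip g (fdiff w' w) = cnj (ip w' g - ip w g)"
        using ip_commute[OF gH fdiff_mem[OF H(2,1)]] ip_fdiff_left[OF H(2,1) gH] by simp
      also have "\<dots> = ip g w' - ip g w" using ip_commute[OF gH] H by simp
      finally show ?thesis using g w w' adj_def by simp
    qed
    then have "fdiff w' w = (\<lambda>y. 0)" using dense_orthogonal_eq_zero[OF dense fdiff_mem[OF H(2,1)]] by blast
    then show "w' = w" by (simp add: fdiff_def fun_eq_iff)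
  qed
  have "adj (kadj H ip F h)" unfolding kadj_def adj_def[symmetric] using w unique by (rule theI)
  then show ?thesis unfolding adj_def by blast
qed

lemma kadj_shift_mem: "h \<in> kadj_dom H ip F \<Longrightarrow> kadj_shift H ip F z h \<in> H"
  unfolding kadj_shift_def using kadj_mem kadj_dom_subset by (blast intro: fdiff_mem scale_mem)

lemma hnorm_kadj_shift_le:
  assumes h: "h \<in> kadj_dom H ip F"
  shows "hnorm ip (kadj_shift H ip F w h) \<le> hnorm ip (kadj_shift H ip F z h) + cmod (w - z) * hnorm ip h"
proof -
  have "kadj_shift H ip F w h = (\<lambda>y. (z - w) * h y + kadj_shift H ip F z h y)"
    unfolding kadj_shift_def fdiff_def by (simp add: algebra_simps)
  moreover have "h \<in> H" using h kadj_dom_subset by blast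
  ultimately show ?thesis
    using hnorm_lincomb_le[where c = "z - w" and f = h and g = "kadj_shift H ip F z h"] kadj_shift_mem[OF h]
    by (simp add: norm_minus_commute)
qed

lemma hnorm_kadj_shift_diff_le:
  assumes g: "g \<in> kadj_dom H ip F" and s: "s \<in> kadj_dom H ip F"
  shows "\<bar>hnorm ip (kadj_shift H ip F z s) - hnorm ip (kadj_shift H ip F z g)\<bar>
     \<le> hnorm ip (fdiff (kadj H ip F s) (kadj H ip F g)) + cmod z * hnorm ip (fdiff s g)"
proof -
  have H: "g \<in> H" "s \<in> H" using g s kadj_dom_subset by auto
  have "fdiff (kadj_shift H ip F z s) (kadj_shift H ip F z g)
      = (\<lambda>y. (-z) * fdiff s g y + fdiff (kadj H ip F s) (kadj H ip F g) y)"
    unfolding kadj_shift_def fdiff_def by (simp add: algebra_simps)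
  then have "hnorm ip (fdiff (kadj_shift H ip F z s) (kadj_shift H ip F z g))
      \<le> cmod z * hnorm ip (fdiff s g) + hnorm ip (fdiff (kadj H ip F s) (kadj H ip F g))"
    using hnorm_lincomb_le[OF fdiff_mem[OF H(2,1)] fdiff_mem[OF kadj_mem[OF s] kadj_mem[OF g]], of "-z"]
    by simp
  then show ?thesis using hnorm_diff_le[OF kadj_shift_mem[OF s] kadj_shift_mem[OF g], of z z] by linarith
qed

lemma kadj_shift_ratio_tendsto:
  assumes s: "\<And>n. s n \<in> kadj_dom H ip F" and g: "g \<in> kadj_dom H ip F" "g \<noteq> (\<lambda>y. 0)"
    and lim: "(\<lambda>n. hnorm ip (fdiff (s n) g)) \<longlonglongrightarrow> 0"
    and lim_kadj: "(\<lambda>n. hnorm ip (fdiff (kadj H ip F (s n)) (kadj H ip F g))) \<longlonglongrightarrow> 0"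
  shows "(\<lambda>n. hnorm ip (kadj_shift H ip F z (s n)) / hnorm ip (s n))
           \<longlonglongrightarrow> hnorm ip (kadj_shift H ip F z g) / hnorm ip g"
proof (rule tendsto_divide)
  have "(\<lambda>n. hnorm ip (kadj_shift H ip F z (s n)) - hnorm ip (kadj_shift H ip F z g)) \<longlonglongrightarrow> 0"
  proof (rule Lim_null_comparison)
    show "\<forall>\<^sub>F n in sequentially.
        norm (hnorm ip (kadj_shift H ip F z (s n)) - hnorm ip (kadj_shift H ip F z g))
        \<le> hnorm ip (fdiff (kadj H ip F (s n)) (kadj H ip F g)) + cmod z * hnorm ip (fdiff (s n) g)"
      using hnorm_kadj_shift_diff_le[OF g(1) s] by simp
    show "(\<lambda>n. hnorm ip (fdiff (kadj H ip F (s n)) (kadj H ip F g)) + cmod z * hnorm ip (fdiff (s n) g))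
        \<longlonglongrightarrow> 0"
      using tendsto_add_zero[OF lim_kadj tendsto_mult_right_zero[OF lim]] by simp
  qed
  then show "(\<lambda>n. hnorm ip (kadj_shift H ip F z (s n))) \<longlonglongrightarrow> hnorm ip (kadj_shift H ip F z g)"
    by (simp add: LIM_zero_iff)
  show "(\<lambda>n. hnorm ip (s n)) \<longlonglongrightarrow> hnorm ip g"
    using s g(1) kadj_dom_subset lim by (intro hnorm_tendsto) auto
  show "hnorm ip g \<noteq> 0" using hnorm_pos g kadj_dom_subset by force
qed

lemma sigma_inf_core_eq:
  assumes core: "is_core ip (kadj_dom H ip F) (kadj H ip F) S"
  shows "sigma_inf ip S (kadj_shift H ip F z) = sigma_inf ip (kadj_dom H ip F) (kadj_shift H ip F z)"
proof (rule antisym)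
  show "sigma_inf ip S (kadj_shift H ip F z) \<le> sigma_inf ip (kadj_dom H ip F) (kadj_shift H ip F z)"
    unfolding sigma_inf_def[of ip "kadj_dom H ip F"]
  proof (rule Inf_greatest, clarify)
    fix g assume g: "g \<in> kadj_dom H ip F" "g \<noteq> (\<lambda>y. 0)"
    obtain s where s: "\<And>n. s n \<in> S" and lim: "(\<lambda>n. hnorm ip (fdiff (s n) g)) \<longlonglongrightarrow> 0"
      and lim_kadj: "(\<lambda>n. hnorm ip (fdiff (kadj H ip F (s n)) (kadj H ip F g))) \<longlonglongrightarrow> 0"
      using core g(1) unfolding is_core_def by blast
    have s_dom: "s n \<in> kadj_dom H ip F" for n using core s unfolding is_core_def by blast
    have "\<forall>\<^sub>F n in sequentially. hnorm ip (s n) > 0"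
      using order_tendstoD(1)[OF hnorm_tendsto[OF _ _ lim] hnorm_pos] s_dom g kadj_dom_subset by blast
    then have "\<forall>\<^sub>F n in sequentially. sigma_inf ip S (kadj_shift H ip F z)
        \<le> ereal (hnorm ip (kadj_shift H ip F z (s n)) / hnorm ip (s n))"
      by eventually_elim (use s hnorm_zero in \<open>auto intro: sigma_inf_le\<close>)
    moreover have "(\<lambda>n. ereal (hnorm ip (kadj_shift H ip F z (s n)) / hnorm ip (s n)))
        \<longlonglongrightarrow> ereal (hnorm ip (kadj_shift H ip F z g) / hnorm ip g)"
      using kadj_shift_ratio_tendsto[OF s_dom g lim lim_kadj] by simp
    ultimately show "sigma_inf ip S (kadj_shift H ip F z)
        \<le> ereal (hnorm ip (kadj_shift H ip F z g) / hnorm ip g)"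
      by (intro tendsto_le[OF _ _ tendsto_const]) auto
  qed
  show "sigma_inf ip (kadj_dom H ip F) (kadj_shift H ip F z) \<le> sigma_inf ip S (kadj_shift H ip F z)"
    using core unfolding is_core_def by (intro sigma_inf_antimono) blast
qed

lemma Gamma_N_subset:
  assumes core: "is_core ip (kadj_dom H ip F) (kadj H ip F) (fspan ((\<lambda>j. kf (xs j)) ` {1..}))"
  shows "Gamma_N H ip kf F xs \<epsilon> N \<subseteq> {z. sigma_inf ip (kadj_dom H ip F) (kadj_shift H ip F z) < ereal \<epsilon>}"
proof -
  have "V_N kf xs N \<subseteq> kadj_dom H ip F"
    using V_N_subset_fspan core unfolding is_core_def by blast
  then show ?thesis
    unfolding Gamma_N_def using sigma_inf_antimono le_less_trans by blast
qed

lemma eventually_Gamma_N_near: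
  assumes core: "is_core ip (kadj_dom H ip F) (kadj H ip F) (fspan ((\<lambda>j. kf (xs j)) ` {1..}))"
    and z: "sigma_inf ip (kadj_dom H ip F) (kadj_shift H ip F z) < ereal \<epsilon>" and "\<delta> > 0"
  shows "\<forall>\<^sub>F N in sequentially. \<exists>w\<in>Gamma_N H ip kf F xs \<epsilon> N. dist z w < \<delta>"
proof -
  obtain s where s: "s \<in> fspan ((\<lambda>j. kf (xs j)) ` {1..})" "s \<noteq> (\<lambda>y. 0)"
    and r: "hnorm ip (kadj_shift H ip F z s) / hnorm ip s < \<epsilon>"
  proof -
    have "sigma_inf ip (fspan ((\<lambda>j. kf (xs j)) ` {1..})) (kadj_shift H ip F z) < ereal \<epsilon>"
      using z sigma_inf_core_eq[OF core] by simp
    then show ?thesis using that unfolding sigma_inf_less_iff by auto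
  qed
  define r where "r = hnorm ip (kadj_shift H ip F z s) / hnorm ip s"
  have s_dom: "s \<in> kadj_dom H ip F" using core s(1) unfolding is_core_def by blast
  have s_pos: "hnorm ip s > 0" using hnorm_pos s(2) s_dom kadj_dom_subset by blast
  have Gamma: "w \<in> Gamma_N H ip kf F xs \<epsilon> N"
    if "s \<in> V_N kf xs N" "w \<in> Grid N" "cmod (w - z) < \<epsilon> - r" for N w
  proof -
    have "sigma_inf ip (V_N kf xs N) (kadj_shift H ip F w)
        \<le> ereal (hnorm ip (kadj_shift H ip F w s) / hnorm ip s)"
      using that(1) s(2) by (rule sigma_inf_le)
    also have "hnorm ip (kadj_shift H ip F w s) / hnorm ip s \<le> r + cmod (w - z)"
      using hnorm_kadj_shift_le[OF s_dom, of w z] s_pos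
      by (simp add: r_def divide_simps)
    also have "ereal (r + cmod (w - z)) < ereal \<epsilon>" using that(3) by simp
    finally show ?thesis unfolding Gamma_N_def using that(2) by simp
  qed
  have "\<forall>\<^sub>F N in sequentially. 1 / real N < min (\<epsilon> - r) \<delta>"
    using r \<open>\<delta> > 0\<close> by (intro order_tendstoD(2)[OF lim_1_over_n]) (simp add: r_def)
  with eventually_mem_V_N[where kf = kf and xs = xs, OF s(1)] eventually_Grid_near[of z]
  show ?thesis
  proof eventually_elim
    case (elim N)
    then obtain w where "w \<in> Grid N" "cmod (w - z) < min (\<epsilon> - r) \<delta>" by force
    then show ?case using Gamma[OF elim(1)] by (auto simp: dist_norm norm_minus_commute)
  qed
qed

end

subsection \<open>Attouch-Wets convergence\<close>

lemma eventually_near_compact: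
  fixes C :: "nat \<Rightarrow> 'a::metric_space set"
  assumes K: "compact K" "K \<subseteq> closure S"
    and near: "\<And>z \<delta>. z \<in> S \<Longrightarrow> \<delta> > 0 \<Longrightarrow> \<forall>\<^sub>F n in sequentially. \<exists>w\<in>C n. dist z w < \<delta>"
    and "\<delta> > 0"
  shows "\<forall>\<^sub>F n in sequentially. \<forall>y\<in>K. \<exists>w\<in>C n. dist y w < \<delta>"
proof -
  have cover: "K \<subseteq> (\<Union>z\<in>S. ball z (\<delta>/2))"
  proof
    fix y assume "y \<in> K"
    then have "\<exists>z\<in>S. dist z y < \<delta>/2"
      using K(2) closure_approachable[of y S] half_gt_zero[OF \<open>\<delta> > 0\<close>] by blast
    then show "y \<in> (\<Union>z\<in>S. ball z (\<delta>/2))" by simp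
  qed
  obtain T where T: "T \<subseteq> S" "finite T" "K \<subseteq> (\<Union>z\<in>T. ball z (\<delta>/2))"
    using compactE_image[OF K(1) _ cover] by (metis open_ball)
  have "\<forall>z\<in>T. \<forall>\<^sub>F n in sequentially. \<exists>w\<in>C n. dist z w < \<delta>/2"
    using T(1) near half_gt_zero[OF \<open>\<delta> > 0\<close>] by blast
  then have "\<forall>\<^sub>F n in sequentially. \<forall>z\<in>T. \<exists>w\<in>C n. dist z w < \<delta>/2"
    by (rule eventually_ball_finite[OF T(2)])
  then show ?thesis
  proof (rule eventually_mono)
    fix n assume near_T: "\<forall>z\<in>T. \<exists>w\<in>C n. dist z w < \<delta>/2"
    show "\<forall>y\<in>K. \<exists>w\<in>C n. dist y w < \<delta>"
    proof
      fix y assume "y \<in> K"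
      then obtain z where z: "z \<in> T" "dist z y < \<delta>/2" using T(3) by auto
      then obtain w where w: "w \<in> C n" "dist z w < \<delta>/2" using near_T by blast
      have "dist y w < \<delta>" using dist_triangle3[of y w z] z(2) w(2) by linarith
      then show "\<exists>w\<in>C n. dist y w < \<delta>" using w(1) by blast
    qed
  qed
qed

lemma bdd_above_infdist_diff:
  "bdd_above ((\<lambda>x. \<bar>infdist x X - infdist x Y\<bar>) ` cball (0::'a::real_normed_vector) r)"
proof (rule bdd_aboveI2)
  fix x :: 'a assume "x \<in> cball 0 r"
  then show "\<bar>infdist x X - infdist x Y\<bar> \<le> \<bar>infdist 0 X - infdist 0 Y\<bar> + 2 * r"
    using infdist_triangle_abs[of x X 0] infdist_triangle_abs[of x Y 0] by simp
qed

lemma infdist_diff_le_if_near: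
  fixes x :: "'a::euclidean_space"
  assumes "X \<subseteq> Y" "closed Y" "p \<in> Y" "norm x \<le> r"
    and near: "\<forall>y\<in>Y \<inter> cball 0 (2 * r + norm p). \<exists>w\<in>X. dist y w < \<delta>"
  shows "\<bar>infdist x X - infdist x Y\<bar> \<le> \<delta>"
proof -
  obtain y where y: "y \<in> Y" "infdist x Y = dist x y"
    using infdist_attains_inf[OF \<open>closed Y\<close>] \<open>p \<in> Y\<close> by blast
  have "dist x y \<le> dist x p" using infdist_le[OF \<open>p \<in> Y\<close>, of x] y(2) by simp
  then have "norm y \<le> 2 * r + norm p"
    using \<open>norm x \<le> r\<close> norm_triangle_ineq4[of x p] norm_triangle_ineq3[of y x]
    by (simp add: dist_norm norm_minus_commute)
  then have "y \<in> Y \<inter> cball 0 (2 * r + norm p)" using y(1) by simp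
  then obtain w where w: "w \<in> X" "dist y w < \<delta>" using near by blast
  have "infdist x X \<le> infdist x Y + \<delta>"
    using infdist_le[OF w(1), of x] dist_triangle[of x w y] w(2) y(2) by linarith
  moreover have "infdist x Y \<le> infdist x X"
    using infdist_mono[OF \<open>X \<subseteq> Y\<close>] w(1) by blast
  ultimately show ?thesis by linarith
qed

lemma AW_converges_closure:
  fixes C :: "nat \<Rightarrow> complex set"
  assumes sub: "\<And>n. C n \<subseteq> closure S"
    and near: "\<And>z \<delta>. z \<in> S \<Longrightarrow> \<delta> > 0 \<Longrightarrow> \<forall>\<^sub>F n in sequentially. \<exists>w\<in>C n. dist z w < \<delta>"
  shows "AW_converges C (closure S)"
proof (cases "S = {}")
  case True
  then show ?thesis using sub by (simp add: AW_converges_def)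
next
  case False
  then obtain p where p: "p \<in> closure S" using closure_subset by blast
  have near_ball: "\<forall>\<^sub>F n in sequentially. \<forall>y\<in>closure S \<inter> cball 0 R. \<exists>w\<in>C n. dist y w < \<delta>"
    if "\<delta> > 0" for R \<delta>
    by (rule eventually_near_compact[OF closed_Int_compact[OF closed_closure compact_cball] _ near that])
      auto
  have nonempty: "\<forall>\<^sub>F n in sequentially. C n \<noteq> {}"
    using near_ball[OF zero_less_one, of "norm p"] by eventually_elim (use p in auto)
  define b where "b n m = (SUP x\<in>cball 0 (real (Suc m)). \<bar>infdist x (C n) - infdist x (closure S)\<bar>)"
    for n m
  have b_nonneg: "0 \<le> b n m" for n m
    unfolding b_def by (rule cSUP_upper2[OF bdd_above_infdist_diff, of 0]) auto
  have b_tendsto: "(\<lambda>n. b n m) \<longlonglongrightarrow> 0" for m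
  proof (rule tendstoI)
    fix e :: real assume "e > 0"
    show "\<forall>\<^sub>F n in sequentially. dist (b n m) 0 < e"
      using near_ball[OF half_gt_zero[OF \<open>e > 0\<close>], of "2 * real (Suc m) + norm p"]
    proof eventually_elim
      case (elim n)
      have "b n m \<le> e/2" unfolding b_def
        using infdist_diff_le_if_near[OF sub closed_closure p _ elim] by (intro cSUP_least) auto
      then show ?case using b_nonneg[of n m] \<open>e > 0\<close> by simp
    qed
  qed
  have "(\<lambda>n. \<Sum>m. (1/2) ^ Suc m * min 1 (b n m)) \<longlonglongrightarrow> (\<Sum>m. (1/2::real) ^ Suc m * min 1 0)"
  proof (rule tannerys_theorem[THEN conjunct2, THEN conjunct2])
    show "(\<lambda>n. (1/2) ^ Suc m * min 1 (b n m)) \<longlonglongrightarrow> (1/2::real) ^ Suc m * min 1 0" for m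
      by (intro tendsto_intros b_tendsto)
    show "\<forall>\<^sub>F (m, n) in at_top \<times>\<^sub>F sequentially. norm ((1/2::real) ^ Suc m * min 1 (b n m)) \<le> (1/2) ^ Suc m"
      using b_nonneg by (intro always_eventually) (auto simp: abs_mult)
    show "summable (\<lambda>m. (1/2::real) ^ Suc m)" by simp
  qed simp
  then have "(\<lambda>n. d_AW (C n) (closure S)) \<longlonglongrightarrow> 0"
    by (simp add: d_AW_def b_def)
  then show ?thesis using False nonempty by (simp add: AW_converges_def)
qed

theorem mainTheorem3:
  fixes H :: "('x \<Rightarrow> complex) set"
    and ip :: "('x \<Rightarrow> complex) \<Rightarrow> ('x \<Rightarrow> complex) \<Rightarrow> complex"
    and kf :: "'x \<Rightarrow> 'x \<Rightarrow> complex"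
    and F :: "'x \<Rightarrow> 'x"
    and xs :: "nat \<Rightarrow> 'x"
    and \<epsilon> :: real
  assumes rkhs: "is_rkhs H ip kf"
    and dense: "densely_defined_in H ip (koop_dom H F)"
    and core: "is_core ip (kadj_dom H ip F) (kadj H ip F) (fspan ((\<lambda>j. kf (xs j)) ` {1..}))"
    and eps: "\<epsilon> > 0"
  shows "(\<forall>N\<ge>1. Gamma_N H ip kf F xs \<epsilon> N \<subseteq> sp_ap_eps H ip F \<epsilon>)
       \<and> AW_converges (Gamma_N H ip kf F xs \<epsilon>) (sp_ap_eps H ip F \<epsilon>)"
proof -
  interpret koopman_adjoint H ip F
    using rkhs dense by unfold_locales (simp_all add: is_rkhs_def)
  let ?S = "{z. sigma_inf ip (kadj_dom H ip F) (kadj_shift H ip F z) < ereal \<epsilon>}"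
  have sub: "Gamma_N H ip kf F xs \<epsilon> N \<subseteq> closure ?S" for N
    using Gamma_N_subset[where kf = kf and xs = xs, OF core] closure_subset by blast
  moreover have "AW_converges (Gamma_N H ip kf F xs \<epsilon>) (closure ?S)"
    using sub eventually_Gamma_N_near[where kf = kf and xs = xs, OF core] by (rule AW_converges_closure) simp
  ultimately show ?thesis unfolding sp_ap_eps_def by blast
qed

end
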